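(* For every $n\ge 1$, the expected value of $\Phi_n$ under the Yule model is $$E_Y(\Phi_n)=n(n-1)-2n\sum_{i=2}^n\frac1i.$$
   Context: A binary phylogenetic tree with $n$ leaves is a rooted tree whose leaves are bijectively labeled by $\{1,\dots,n\}$ and whose internal nodes each have exactly two children; $\mathcal{BT}_n$ is the set of such trees up to isomorphism. $\kappa_T(v)$ is the number of leaves below $v$ and $V_{int}(T)$ the set of internal nodes. The depth $\delta_T(v)$ is the number of arcs from the root to $v$; $\varphi_T(i,j)=\delta_T(LCA_T(i,j))$ ($LCA$ = lowest common ancestor), and $\Phi(T)=\sum_{1\le i<j\le n}\varphi_T(i,j)$. $\Phi_n$ is the random variable $\Phi(T)$ for $T$ random in $\mathcal{BT}_n$. Under the Yule model $T\in\mathcal{BT}_n$ has probability $P_Y(T)=\frac{2^{n-1}}{n!}\prod_{v\in V_{int}(T)}\frac{1}{\kappa_T(v)-1}$, and $E_Y$ denotes expectation under it. *)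

theory Defs
  imports Complex_Main
begin

datatype tree = Leaf nat | Node tree tree

fun leaves :: "tree \<Rightarrow> nat set" where
  "leaves (Leaf i) = {i}"
| "leaves (Node l r) = leaves l \<union> leaves r"

text \<open>Canonical representatives of isomorphism classes: labels are distinct
(the leaf sets of the two children are disjoint) and the children are ordered
so that the left child contains the smaller minimal label. Since labels are
distinct, every tree up to isomorphism has exactly one such representative.\<close>
fun canonical :: "tree \<Rightarrow> bool" where
  "canonical (Leaf i) = True"
| "canonical (Node l r) \<longleftrightarrow> canonical l \<and> canonical r \<and>
     leaves l \<inter> leaves r = {} \<and> Min (leaves l) < Min (leaves r)"

definition BT :: "nat \<Rightarrow> tree set" where
  "BT n = {T. canonical T \<and> leaves T = {1..n}}"

definition kappa :: "tree \<Rightarrow> nat" where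
  "kappa T = card (leaves T)"

fun yule_prod :: "tree \<Rightarrow> real" where
  "yule_prod (Leaf i) = 1"
| "yule_prod (Node l r) = (1 / (real (kappa (Node l r)) - 1)) * yule_prod l * yule_prod r"

definition P_Y :: "nat \<Rightarrow> tree \<Rightarrow> real" where
  "P_Y n T = 2 ^ (n - 1) / fact n * yule_prod T"

fun lca_depth :: "tree \<Rightarrow> nat \<Rightarrow> nat \<Rightarrow> nat" where
  "lca_depth (Leaf k) i j = 0"
| "lca_depth (Node l r) i j =
     (if i \<in> leaves l \<and> j \<in> leaves l then 1 + lca_depth l i j
      else if i \<in> leaves r \<and> j \<in> leaves r then 1 + lca_depth r i j
      else 0)"

definition Phi :: "tree \<Rightarrow> nat" where
  "Phi T = (\<Sum>(i, j) \<in> {(i, j). i \<in> leaves T \<and> j \<in> leaves T \<and> i < j}. lca_depth T i j)"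

definition E_Y_Phi :: "nat \<Rightarrow> real" where
  "E_Y_Phi n = (\<Sum>T \<in> BT n. P_Y n T * real (Phi T))"

end

theory Submission
  imports Defs
begin

(* For a finite label set S, let BTs S be the canonical binary trees with leaf set S.
   Every such tree with at least two leaves is uniquely Node l r, where the leaf set L
   of l is a "split" of S: a proper subset containing Min S.  Along this decomposition
     - the Yule product factors:  yule_prod (Node l r) = yule_prod l * yule_prod r / (m - 1),
     - Phi is additive up to the pairs below the root: Phi l + Phi r + C(|L|,2) + C(|R|,2).
   Summing over all trees therefore gives recursions in m = |S| alone, because the
   splits of size k are counted by C(m-1, k-1).  By strong induction on m we show
     (1)  the total Yule product of BTs S is  W m = 2 m! / 2^m,  and
     (2)  the Yule-weighted sum of Phi over BTs S is  W m * Phi_mean m,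
   where Phi_mean m is the closed form of the theorem; the induction step for (2) reduces
   to a telescoping identity for harmonic sums.  The theorem is (2) for S = {1..n},
   multiplied by the normalising constant 2^(n-1)/n! = 1 / W n. *)

lemma finite_leaves: "finite (leaves T)"
  by (induction T) auto

lemma leaves_nonempty: "leaves T \<noteq> {}"
  by (induction T) auto

section \<open>The recursion for Phi\<close>

definition ordered_pairs :: "nat set \<Rightarrow> (nat \<times> nat) set" where
  "ordered_pairs A = {(i, j). i \<in> A \<and> j \<in> A \<and> i < j}"

lemma finite_ordered_pairs: "finite A \<Longrightarrow> finite (ordered_pairs A)"
  by (rule finite_subset[of _ "A \<times> A"]) (auto simp: ordered_pairs_def)

text \<open>A set of size k has C(k,2) ordered pairs: they correspond to its 2-subsets.\<close>
lemma card_ordered_pairs: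
  assumes "finite A"
  shows "card (ordered_pairs A) = card A choose 2"
proof -
  have "bij_betw (\<lambda>(i, j). {i, j}) (ordered_pairs A) {B. B \<subseteq> A \<and> card B = 2}"
  proof (rule bij_betw_imageI)
    show "inj_on (\<lambda>(i, j). {i, j}) (ordered_pairs A)"
      by (auto simp: inj_on_def ordered_pairs_def doubleton_eq_iff)
    show "(\<lambda>(i, j). {i, j}) ` ordered_pairs A = {B. B \<subseteq> A \<and> card B = 2}"
    proof (intro equalityI subsetI)
      fix B assume "B \<in> {B. B \<subseteq> A \<and> card B = 2}"
      then obtain x y where B: "B = {x, y}" "x \<noteq> y" "B \<subseteq> A"
        by (auto simp: card_2_iff)
      then obtain i j where "B = {i, j}" "i < j"
        by (metis insert_commute linorder_neqE_nat)
      with B(3) show "B \<in> (\<lambda>(i, j). {i, j}) ` ordered_pairs A"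
        by (auto simp: ordered_pairs_def image_iff intro!: bexI[of _ "(i, j)"])
    qed (auto simp: ordered_pairs_def)
  qed
  then have "card (ordered_pairs A) = card {B. B \<subseteq> A \<and> card B = 2}"
    by (rule bij_betw_same_card)
  also have "\<dots> = card A choose 2"
    using n_subsets[OF assms] by simp
  finally show ?thesis .
qed

lemma real_choose_two: "real (k choose 2) = real k * (real k - 1) / 2"
proof (induction k)
  case (Suc k)
  have "Suc k choose 2 = k + (k choose 2)"
    by (simp add: numeral_2_eq_2)
  then show ?case
    using Suc by (simp add: field_simps)
qed simp

lemma Phi_ordered_pairs: "Phi T = (\<Sum>p\<in>ordered_pairs (leaves T). lca_depth T (fst p) (snd p))"
  unfolding Phi_def ordered_pairs_def by (rule sum.cong) auto

text \<open>A pair inside one subtree has its LCA one level deeper there; a pair separated by the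
  root has LCA depth 0.  Hence Phi grows by the number of pairs on each side.\<close>
lemma Phi_Node:
  assumes disjoint: "leaves l \<inter> leaves r = {}"
  shows "Phi (Node l r) =
    Phi l + Phi r + (card (leaves l) choose 2) + (card (leaves r) choose 2)"
proof -
  let ?L = "leaves l" and ?R = "leaves r"
  let ?PL = "ordered_pairs ?L" and ?PR = "ordered_pairs ?R"
  have fin: "finite (ordered_pairs (?L \<union> ?R))"
    by (simp add: finite_ordered_pairs finite_leaves)
  have depth: "lca_depth (Node l r) (fst p) (snd p) =
      (if p \<in> ?PL then 1 + lca_depth l (fst p) (snd p) else 0) +
      (if p \<in> ?PR then 1 + lca_depth r (fst p) (snd p) else 0)"
    if "p \<in> ordered_pairs (?L \<union> ?R)" for p
    using that disjoint by (auto simp: ordered_pairs_def)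
  have left: "{p \<in> ordered_pairs (?L \<union> ?R). p \<in> ?PL} = ?PL"
   and right: "{p \<in> ordered_pairs (?L \<union> ?R). p \<in> ?PR} = ?PR"
    by (auto simp: ordered_pairs_def)
  have "Phi (Node l r) = (\<Sum>p\<in>ordered_pairs (?L \<union> ?R).
      (if p \<in> ?PL then 1 + lca_depth l (fst p) (snd p) else 0) +
      (if p \<in> ?PR then 1 + lca_depth r (fst p) (snd p) else 0))"
    unfolding Phi_ordered_pairs leaves.simps by (rule sum.cong[OF refl depth])
  also have "\<dots> =
      (\<Sum>p\<in>?PL. 1 + lca_depth l (fst p) (snd p)) + (\<Sum>p\<in>?PR. 1 + lca_depth r (fst p) (snd p))"
    unfolding sum.distrib sum.inter_filter[OF fin, symmetric] left right ..
  also have "\<dots> = Phi l + Phi r + card ?PL + card ?PR"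
    unfolding Phi_ordered_pairs sum.distrib by simp
  finally show ?thesis
    by (simp add: card_ordered_pairs finite_leaves)
qed

section \<open>Decomposing canonical trees at the root\<close>

definition BTs :: "nat set \<Rightarrow> tree set" where
  "BTs S = {T. canonical T \<and> leaves T = S}"

text \<open>The possible leaf sets of the left subtree at the root: in a canonical tree it is the
  side containing the smallest label.\<close>
definition Splits :: "nat set \<Rightarrow> nat set set" where
  "Splits S = {L. L \<subseteq> S \<and> Min S \<in> L \<and> L \<noteq> S}"

lemma finite_Splits: "finite S \<Longrightarrow> finite (Splits S)"
  by (rule finite_subset[of _ "Pow S"]) (auto simp: Splits_def)

lemma card_Splits:
  assumes "finite S" "L \<in> Splits S"
  shows "1 \<le> card L" "card L < card S" "card (S - L) = card S - card L"
proof -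
  have L: "L \<subseteq> S" "Min S \<in> L" "L \<noteq> S"
    using assms(2) by (auto simp: Splits_def)
  then show "1 \<le> card L"
    using assms(1) by (metis One_nat_def Suc_leI card_gt_0_iff empty_iff finite_subset)
  show "card L < card S"
    using L assms(1) by (meson psubsetI psubset_card_mono)
  show "card (S - L) = card S - card L"
    using L assms(1) by (simp add: card_Diff_subset finite_subset)
qed

lemma BTs_singleton: "BTs {a} = {Leaf a}"
proof -
  have "T = Leaf a" if "canonical T" "leaves T = {a}" for T
  proof (cases T)
    case (Node l r)
    then have "leaves l \<subseteq> {a}" "leaves r \<subseteq> {a}" "leaves l \<inter> leaves r = {}"
      using that by auto
    then show ?thesis
      using leaves_nonempty[of l] leaves_nonempty[of r] by blast
  qed (use that in auto)
  then show ?thesis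
    by (auto simp: BTs_def)
qed

lemma BTs_Node:
  assumes fin: "finite S" and two: "card S \<ge> 2"
  shows "BTs S = (\<lambda>(L, l, r). Node l r) ` (SIGMA L:Splits S. BTs L \<times> BTs (S - L))"
proof (intro equalityI subsetI)
  fix T assume T: "T \<in> BTs S"
  show "T \<in> (\<lambda>(L, l, r). Node l r) ` (SIGMA L:Splits S. BTs L \<times> BTs (S - L))"
  proof (cases T)
    case (Leaf i)
    then show ?thesis
      using T two by (auto simp: BTs_def)
  next
    case (Node l r)
    let ?L = "leaves l" and ?R = "leaves r"
    have T': "canonical l" "canonical r" "?L \<inter> ?R = {}" "Min ?L < Min ?R" "?L \<union> ?R = S"
      using T Node by (auto simp: BTs_def)
    have "Min S = Min ?L"
      using T'(4) T'(5)[symmetric] by (simp add: Min_Un finite_leaves leaves_nonempty)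
    then have "Min S \<in> ?L"
      by (simp add: finite_leaves leaves_nonempty)
    moreover have "?L \<noteq> S"
      using T'(3,5) leaves_nonempty[of r] by blast
    ultimately have "?L \<in> Splits S"
      using T'(5) by (auto simp: Splits_def)
    moreover have "S - ?L = ?R"
      using T'(3,5) by blast
    ultimately show ?thesis
      using Node T' by (auto simp: BTs_def image_iff intro!: bexI[of _ "(?L, l, r)"])
  qed
next
  fix T assume "T \<in> (\<lambda>(L, l, r). Node l r) ` (SIGMA L:Splits S. BTs L \<times> BTs (S - L))"
  then obtain L l r where T: "T = Node l r"
    and L: "L \<in> Splits S" and l: "l \<in> BTs L" and r: "r \<in> BTs (S - L)"
    by auto
  have LS: "L \<subseteq> S" "Min S \<in> L"
    using L by (auto simp: Splits_def)
  have fin': "finite L" "finite (S - L)" "S - L \<noteq> {}"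
    using L fin finite_subset by (auto simp: Splits_def)
  have "Min L = Min S"
  proof (rule antisym)
    show "Min L \<le> Min S"
      using LS fin'(1) by simp
    show "Min S \<le> Min L"
      using LS fin'(1) fin by (metis Min_in Min_le empty_iff subsetD)
  qed
  moreover have "Min S < Min (S - L)"
  proof -
    have "Min (S - L) \<in> S" "Min (S - L) \<noteq> Min S"
      using Min_in[OF fin'(2,3)] LS by auto
    then show ?thesis
      using fin by (simp add: order.not_eq_order_implies_strict)
  qed
  ultimately show "T \<in> BTs S"
    using T l r LS by (auto simp: BTs_def)
qed

lemma finite_BTs: "finite S \<Longrightarrow> finite (BTs S)"
proof (induction "card S" arbitrary: S rule: less_induct)
  case less
  show ?case
  proof (cases "card S \<ge> 2")
    case True
    have "finite (BTs L) \<and> finite (BTs (S - L))" if "L \<in> Splits S" for L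
      using card_Splits[OF less.prems that] less.prems that
      by (intro conjI less.hyps) (auto simp: Splits_def intro: finite_subset)
    then show ?thesis
      using BTs_Node[OF less.prems True] finite_Splits[OF less.prems] by auto
  next
    case False
    then consider "S = {}" | a where "S = {a}"
      using less.prems by (metis One_nat_def card_1_singletonE card_0_eq less_2_cases not_le)
    moreover have "BTs {} = {}"
      by (auto simp: BTs_def leaves_nonempty)
    ultimately show ?thesis
      by cases (simp_all add: BTs_singleton)
  qed
qed

lemma sum_BTs_Node:
  assumes fin: "finite S" and two: "card S \<ge> 2"
  shows "(\<Sum>T\<in>BTs S. f T) = (\<Sum>L\<in>Splits S. \<Sum>l\<in>BTs L. \<Sum>r\<in>BTs (S - L). f (Node l r))"
proof -
  have inj: "inj_on (\<lambda>(L, l, r). Node l r) (SIGMA L:Splits S. BTs L \<times> BTs (S - L))"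
    by (auto simp: inj_on_def BTs_def)
  have fin_parts: "finite (BTs L \<times> BTs (S - L))" if "L \<in> Splits S" for L
    using fin that by (auto simp: Splits_def intro!: finite_BTs intro: finite_subset)
  have "(\<Sum>T\<in>BTs S. f T) =
      (\<Sum>(L, l, r)\<in>(SIGMA L:Splits S. BTs L \<times> BTs (S - L)). f (Node l r))"
    unfolding BTs_Node[OF fin two] sum.reindex[OF inj] by (simp add: case_prod_beta)
  also have "\<dots> = (\<Sum>L\<in>Splits S. \<Sum>(l, r)\<in>BTs L \<times> BTs (S - L). f (Node l r))"
    by (rule sum.Sigma[symmetric, OF finite_Splits[OF fin]]) (simp add: fin_parts)
  also have "\<dots> = (\<Sum>L\<in>Splits S. \<Sum>l\<in>BTs L. \<Sum>r\<in>BTs (S - L). f (Node l r))"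
    by (simp add: sum.cartesian_product)
  finally show ?thesis .
qed

text \<open>A split is determined by its elements other than Min S, so there are C(m-1, k-1)
  splits of size k of an m-element set.\<close>
lemma sum_Splits_by_card:
  fixes h :: "nat \<Rightarrow> real"
  assumes fin: "finite S" and m: "card S = m" "m \<ge> 1"
  shows "(\<Sum>L\<in>Splits S. h (card L)) = (\<Sum>k=1..m-1. real ((m-1) choose (k-1)) * h k)"
proof -
  define a where "a = Min S"
  define A where "A = S - {a}"
  have aS: "a \<in> S"
    using m fin unfolding a_def by (metis Min_in card.empty not_one_le_zero)
  have fA: "finite A" and cA: "card A = m - 1"
    using aS fin m by (auto simp: A_def)
  have sizes: "card ` Splits S \<subseteq> {1..m-1}"
    using card_Splits[OF fin] m by fastforce
  have count: "card {L \<in> Splits S. card L = k} = (m - 1) choose (k - 1)"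
    if k: "k \<in> {1..m-1}" for k
  proof -
    have "bij_betw (insert a) {B. B \<subseteq> A \<and> card B = k - 1} {L \<in> Splits S. card L = k}"
    proof (rule bij_betw_imageI)
      show "inj_on (insert a) {B. B \<subseteq> A \<and> card B = k - 1}"
        by (auto simp: inj_on_def A_def)
      show "insert a ` {B. B \<subseteq> A \<and> card B = k - 1} = {L \<in> Splits S. card L = k}"
      proof (intro equalityI subsetI)
        fix L assume "L \<in> insert a ` {B. B \<subseteq> A \<and> card B = k - 1}"
        then obtain B where L: "L = insert a B" and B: "B \<subseteq> A" "card B = k - 1"
          by auto
        have "finite B" "a \<notin> B"
          using B fA finite_subset by (auto simp: A_def)
        then have "card L = k"
          using L B k by simp
        moreover have "L \<noteq> S"
          using \<open>card L = k\<close> k m by auto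
        ultimately show "L \<in> {L \<in> Splits S. card L = k}"
          using L B aS by (auto simp: Splits_def A_def a_def)
      next
        fix L assume L: "L \<in> {L \<in> Splits S. card L = k}"
        then have "a \<in> L" "L \<subseteq> S" "finite L"
          using fin by (auto simp: Splits_def a_def intro: finite_subset)
        then show "L \<in> insert a ` {B. B \<subseteq> A \<and> card B = k - 1}"
          using L by (auto simp: image_iff A_def intro!: exI[of _ "L - {a}"])
      qed
    qed
    then have "card {L \<in> Splits S. card L = k} = card {B. B \<subseteq> A \<and> card B = k - 1}"
      by (rule bij_betw_same_card[symmetric])
    also have "\<dots> = (m - 1) choose (k - 1)"
      using n_subsets[OF fA] cA by simp
    finally show ?thesis .
  qed
  have "(\<Sum>L\<in>Splits S. h (card L)) = (\<Sum>k=1..m-1. \<Sum>L\<in>{L \<in> Splits S. card L = k}. h (card L))"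
    by (rule sum.group[OF finite_Splits[OF fin] _ sizes, symmetric]) simp
  also have "\<dots> = (\<Sum>k=1..m-1. real ((m-1) choose (k-1)) * h k)"
    by (rule sum.cong[OF refl]) (simp add: count)
  finally show ?thesis .
qed

section \<open>Yule weights\<close>

text \<open>The total Yule product over trees with k leaves; 2^(k-1)/k! = 1/W k is the
  normalising constant of the Yule distribution.\<close>
definition W :: "nat \<Rightarrow> real" where
  "W k = 2 * fact k / 2 ^ k"

lemma sum_Splits_weights:
  fixes h :: "nat \<Rightarrow> real"
  assumes fin: "finite S" and m: "card S = m" "m \<ge> 1"
  shows "(\<Sum>L\<in>Splits S. W (card L) * W (m - card L) * h (card L)) =
    2 * W m / real m * (\<Sum>k=1..m-1. real k * h k)"
proof -
  have coefficient: "real ((m-1) choose (k-1)) * (W k * W (m - k)) = 2 * W m / real m * real k"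
    if "1 \<le> k" "k < m" for k
  proof -
    have "k - 1 \<le> m - 1" "m - 1 - (k - 1) = m - k"
      using that by auto
    then have "real ((m-1) choose (k-1)) = fact (m-1) / (fact (k-1) * fact (m-k))"
      using binomial_fact[of "k - 1" "m - 1"] by simp
    moreover have "(fact k :: real) = real k * fact (k-1)" "(fact m :: real) = real m * fact (m-1)"
      using that fact_reduce[of k] fact_reduce[of m] by auto
    moreover have "(2::real) ^ m = 2 ^ k * 2 ^ (m - k)"
      using that by (simp add: power_add[symmetric])
    ultimately show ?thesis
      using that by (simp add: W_def field_simps)
  qed
  have "(\<Sum>L\<in>Splits S. W (card L) * W (m - card L) * h (card L)) =
      (\<Sum>k=1..m-1. real ((m-1) choose (k-1)) * (W k * W (m - k)) * h k)"
    using sum_Splits_by_card[OF fin m, of "\<lambda>k. W k * W (m - k) * h k"] by (simp add: mult.assoc)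
  also have "\<dots> = (\<Sum>k=1..m-1. 2 * W m / real m * (real k * h k))"
  proof (rule sum.cong[OF refl])
    fix k assume "k \<in> {1..m-1}"
    then show "real ((m-1) choose (k-1)) * (W k * W (m - k)) * h k =
        2 * W m / real m * (real k * h k)"
      using coefficient[of k] by auto
  qed
  finally show ?thesis
    by (simp add: sum_distrib_left)
qed

text \<open>Pairing k with m - k: the weights k and m - k add up to m.\<close>
lemma sum_reflected:
  fixes g :: "nat \<Rightarrow> real"
  shows "(\<Sum>k=1..m-1. real k * (g k + g (m - k))) = real m * (\<Sum>k=1..m-1. g k)"
proof -
  have "(\<Sum>k=1..m-1. real k * g (m - k)) = (\<Sum>k=1..m-1. real (m - k) * g k)"
    by (rule sum.reindex_bij_witness[of _ "\<lambda>k. m - k" "\<lambda>k. m - k"]) auto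
  then have "(\<Sum>k=1..m-1. real k * (g k + g (m - k))) = (\<Sum>k=1..m-1. (real k + real (m - k)) * g k)"
    by (simp add: distrib_left distrib_right sum.distrib)
  also have "\<dots> = (\<Sum>k=1..m-1. real m * g k)"
    by (rule sum.cong) (auto simp: of_nat_diff)
  finally show ?thesis
    by (simp add: sum_distrib_left)
qed

lemma sum_product_additive:
  fixes u v p q :: "'a \<Rightarrow> real"
  shows "(\<Sum>l\<in>A. \<Sum>r\<in>B. u l * v r * (p l + q r + K)) =
    (\<Sum>l\<in>A. u l * p l) * (\<Sum>r\<in>B. v r) + (\<Sum>l\<in>A. u l) * (\<Sum>r\<in>B. v r * q r)
      + (\<Sum>l\<in>A. u l) * (\<Sum>r\<in>B. v r) * K"
proof -
  have "(\<Sum>l\<in>A. \<Sum>r\<in>B. u l * v r * (p l + q r + K)) =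
      (\<Sum>l\<in>A. \<Sum>r\<in>B. (u l * p l) * v r) + (\<Sum>l\<in>A. \<Sum>r\<in>B. u l * (v r * q r))
        + (\<Sum>l\<in>A. \<Sum>r\<in>B. u l * v r) * K"
    by (simp add: sum.distrib sum_distrib_left sum_distrib_right algebra_simps)
  then show ?thesis
    by (simp only: sum_product)
qed

lemma yule_prod_Node:
  assumes "l \<in> BTs L" "r \<in> BTs (S - L)" "L \<in> Splits S" "card S = m"
  shows "yule_prod (Node l r) = yule_prod l * yule_prod r / (real m - 1)"
proof -
  have "leaves (Node l r) = S"
    using assms by (auto simp: BTs_def Splits_def)
  then show ?thesis
    using assms(4) by (simp add: kappa_def)
qed

lemma sum_yule_prod:
  assumes "finite S" "card S = m" "m \<ge> 1"
  shows "(\<Sum>T\<in>BTs S. yule_prod T) = W m"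
  using assms
proof (induction m arbitrary: S rule: less_induct)
  case (less m)
  show ?case
  proof (cases "m = 1")
    case True
    with less.prems obtain a where "S = {a}"
      using card_1_singletonE by blast
    then show ?thesis
      using True by (simp add: BTs_singleton W_def)
  next
    case False
    then have m: "m \<ge> 2"
      using less.prems by simp
    have sides: "(\<Sum>l\<in>BTs L. \<Sum>r\<in>BTs (S - L). yule_prod (Node l r)) =
        W (card L) * W (m - card L) / (real m - 1)" if L: "L \<in> Splits S" for L
    proof -
      have IH: "(\<Sum>T\<in>BTs L. yule_prod T) = W (card L)"
               "(\<Sum>T\<in>BTs (S - L). yule_prod T) = W (m - card L)"
        using card_Splits[OF less.prems(1) L] less.prems L
        by (auto simp: Splits_def intro!: less.IH intro: finite_subset)
      have "(\<Sum>l\<in>BTs L. \<Sum>r\<in>BTs (S - L). yule_prod (Node l r)) =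
          (\<Sum>l\<in>BTs L. \<Sum>r\<in>BTs (S - L). yule_prod l * yule_prod r / (real m - 1))"
        by (intro sum.cong refl) (rule yule_prod_Node[OF _ _ L less.prems(2)])
      also have "\<dots> = (\<Sum>T\<in>BTs L. yule_prod T) * (\<Sum>T\<in>BTs (S - L). yule_prod T) / (real m - 1)"
        by (simp add: sum_product sum_divide_distrib)
      finally show ?thesis
        by (simp add: IH)
    qed
    have "(\<Sum>T\<in>BTs S. yule_prod T) =
        (\<Sum>L\<in>Splits S. \<Sum>l\<in>BTs L. \<Sum>r\<in>BTs (S - L). yule_prod (Node l r))"
      using m less.prems by (intro sum_BTs_Node) auto
    also have "\<dots> = (\<Sum>L\<in>Splits S. W (card L) * W (m - card L) * 1) / (real m - 1)"
      by (simp add: sides sum_divide_distrib del: yule_prod.simps)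
    also have "\<dots> = 2 * W m / real m * (\<Sum>k=1..m-1. real k * 1) / (real m - 1)"
      using sum_Splits_weights[OF less.prems(1,2), of "\<lambda>_. 1"] m by simp
    also have "(\<Sum>k=1..m-1. real k * 1) = real m * (real m - 1) / 2"
      using sum_reflected[where m = m and g = "\<lambda>_. 1"] m
      by (simp add: of_nat_diff sum_distrib_right[symmetric])
    also have "2 * W m / real m * (real m * (real m - 1) / 2) / (real m - 1) = W m"
      using m by (simp add: field_simps)
    finally show ?thesis .
  qed
qed

section \<open>The expected value of Phi\<close>

definition Phi_mean :: "nat \<Rightarrow> real" where
  "Phi_mean m = real m * (real m - 1) - 2 * real m * (\<Sum>i = 2..m. 1 / real i)"

text \<open>The harmonic identity that closes the recursion for Phi: summing the contributions
  of subtrees of every size below m yields (m-1)/2 times the closed form for m.\<close>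
lemma sum_Phi_mean: "(\<Sum>k=1..n. Phi_mean k + real (k choose 2)) = real n * Phi_mean (Suc n) / 2"
proof (induction n)
  case 0
  then show ?case
    by (simp add: Phi_mean_def)
next
  case (Suc n)
  define H where "H = (\<Sum>i = 2..Suc n. 1 / real i)"
  have H_Suc: "(\<Sum>i = 2..Suc (Suc n). 1 / real i) = H + 1 / (real n + 2)"
    unfolding H_def by (simp add: sum.cl_ivl_Suc)
  have "(\<Sum>k=1..Suc n. Phi_mean k + real (k choose 2)) =
      real n * Phi_mean (Suc n) / 2 + (Phi_mean (Suc n) + real (Suc n choose 2))"
    using Suc by simp
  also have "\<dots> = real (Suc n) * Phi_mean (Suc (Suc n)) / 2"
    unfolding real_choose_two Phi_mean_def H_Suc H_def[symmetric]
    by (simp add: field_simps)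
  finally show ?case .
qed

lemma sum_yule_prod_Phi:
  assumes "finite S" "card S = m" "m \<ge> 1"
  shows "(\<Sum>T\<in>BTs S. yule_prod T * real (Phi T)) = W m * Phi_mean m"
  using assms
proof (induction m arbitrary: S rule: less_induct)
  case (less m)
  show ?case
  proof (cases "m = 1")
    case True
    with less.prems obtain a where "S = {a}"
      using card_1_singletonE by blast
    then show ?thesis
      using True by (simp add: BTs_singleton Phi_def Phi_mean_def)
  next
    case False
    then have m: "m \<ge> 2"
      using less.prems by simp
    define G where "G k = Phi_mean k + real (k choose 2)" for k
    have sides: "(\<Sum>l\<in>BTs L. \<Sum>r\<in>BTs (S - L). yule_prod (Node l r) * real (Phi (Node l r))) =
        W (card L) * W (m - card L) * (G (card L) + G (m - card L)) / (real m - 1)"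
      if L: "L \<in> Splits S" for L
    proof -
      have sizes: "card L < m" "1 \<le> card L" "card (S - L) = m - card L"
        using card_Splits[OF less.prems(1) L] less.prems(2) by auto
      have fin: "finite L" "finite (S - L)"
        using less.prems(1) L by (auto simp: Splits_def intro: finite_subset)
      have IH: "(\<Sum>T\<in>BTs L. yule_prod T * real (Phi T)) = W (card L) * Phi_mean (card L)"
               "(\<Sum>T\<in>BTs (S - L). yule_prod T * real (Phi T)) = W (m - card L) * Phi_mean (m - card L)"
        using sizes fin by (auto intro!: less.IH)
      have weights: "(\<Sum>T\<in>BTs L. yule_prod T) = W (card L)"
                    "(\<Sum>T\<in>BTs (S - L). yule_prod T) = W (m - card L)"
        using sizes fin by (auto intro!: sum_yule_prod)
      define K where "K = real (card L choose 2) + real (card (S - L) choose 2)"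
      have node: "yule_prod (Node l r) * real (Phi (Node l r)) =
          yule_prod l * yule_prod r * (real (Phi l) + real (Phi r) + K) / (real m - 1)"
        if "l \<in> BTs L" "r \<in> BTs (S - L)" for l r
        using that yule_prod_Node[OF that L less.prems(2)] Phi_Node[of l r]
        by (auto simp: BTs_def K_def)
      have "(\<Sum>l\<in>BTs L. \<Sum>r\<in>BTs (S - L). yule_prod (Node l r) * real (Phi (Node l r))) =
          (\<Sum>l\<in>BTs L. \<Sum>r\<in>BTs (S - L). yule_prod l * yule_prod r * (real (Phi l) + real (Phi r) + K))
            / (real m - 1)"
        by (simp add: node sum_divide_distrib del: yule_prod.simps)
      also have "\<dots> = W (card L) * W (m - card L) * (G (card L) + G (m - card L)) / (real m - 1)"
        unfolding sum_product_additive
        by (simp add: IH weights G_def K_def sizes algebra_simps)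
      finally show ?thesis .
    qed
    have "(\<Sum>T\<in>BTs S. yule_prod T * real (Phi T)) =
        (\<Sum>L\<in>Splits S. \<Sum>l\<in>BTs L. \<Sum>r\<in>BTs (S - L).
          yule_prod (Node l r) * real (Phi (Node l r)))"
      using m less.prems by (intro sum_BTs_Node) auto
    also have "\<dots> =
        (\<Sum>L\<in>Splits S. W (card L) * W (m - card L) * (G (card L) + G (m - card L))) / (real m - 1)"
      by (simp add: sides sum_divide_distrib del: yule_prod.simps)
    also have "\<dots> = 2 * W m / real m * (\<Sum>k=1..m-1. real k * (G k + G (m - k))) / (real m - 1)"
      using sum_Splits_weights[OF less.prems(1,2), of "\<lambda>k. G k + G (m - k)"] m by simp
    also have "(\<Sum>k=1..m-1. real k * (G k + G (m - k))) = real m * (real (m - 1) * Phi_mean m / 2)"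
      using sum_reflected[where m = m and g = G] sum_Phi_mean[of "m - 1"] m by (simp add: G_def)
    also have "2 * W m / real m * (real m * (real (m - 1) * Phi_mean m / 2)) / (real m - 1) =
        W m * Phi_mean m"
      using m by (simp add: of_nat_diff field_simps)
    finally show ?thesis .
  qed
qed

theorem mainTheorem14:
  fixes n :: nat
  assumes "n \<ge> 1"
  shows "E_Y_Phi n = real n * (real n - 1) - 2 * real n * (\<Sum>i = 2..n. 1 / real i)"
proof -
  have "E_Y_Phi n = 2 ^ (n - 1) / fact n * (\<Sum>T\<in>BTs {1..n}. yule_prod T * real (Phi T))"
    unfolding E_Y_Phi_def P_Y_def BT_def BTs_def[symmetric] sum_distrib_left
    by (simp add: mult.assoc)
  also have "\<dots> = 2 ^ (n - 1) * 2 / 2 ^ n * Phi_mean n"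
    using sum_yule_prod_Phi[of "{1..n}" n] assms by (simp add: W_def)
  also have "(2::real) ^ (n - 1) * 2 = 2 ^ n"
    using assms by (cases n) auto
  finally show ?thesis
    by (simp add: Phi_mean_def)
qed

end
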